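(* There is no (possibly randomized) transaction fee mechanism with non-trivial miner revenue that satisfies both UIC and $1$-SCP. This holds whether the block size $B$ is finite or infinite.
   Context: Setting (transaction fee mechanism, TFM). Each user $i$ has a private true value $v_i\ge 0$ for having its transaction confirmed in the next block and submits a single bid $b_i\ge 0$; a bid vector is $\mathbf b=(b_1,\dots,b_m)$, $\mathbf b_{-i}$ denotes all bids except $b_i$, and $(\mathbf b_{-i},b_i')$ the vector with $b_i$ replaced by $b_i'$. A block contains at most $B$ transactions ($B$ a positive integer, or $B=\infty$). A TFM consists of an inclusion rule (run by the miner) selecting at most $B$ bids to include in the block, and a confirmation rule, payment rule and miner-revenue rule (run by the blockchain, using only the included bids) deciding which included bids are confirmed, what each confirmed bid pays (at most its bid; unconfirmed bids pay $0$), and what the miner receives (at most the total payment of confirmed bids; any remainder is "burnt"). Rules may be randomized; the mechanism treats users symmetrically (swapping two users' bids swaps their outcomes). Composing the honest inclusion rule with the other rules gives $(\mathbf x,\mathbf p,\mu)$: $x_i(\mathbf b)\in[0,1]$ is the probability user $i$ is confirmed, $p_i(\mathbf b)$ its expected payment, $\mu(\mathbf b)$ the miner's expected revenue. The TFM has non-trivial miner revenue if $\mu$ is not identically $0$. Strategic behavior: a strategic player is a single user, the miner, or a coalition of the miner with some users; it may have its users bid untruthfully after seeing all other bids, inject fake bids (true value $0$), and, if it contains the miner, include any set of at most $B$ available bids instead of following the inclusion rule. Ordinary utility of a player: miner's revenue (if the miner belongs to the player) plus $v-p$ for each confirmed transaction of the player with true value $v$ and payment $p$. UIC: assuming the miner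 follows the mechanism, each user's expected utility is maximized by bidding truthfully (no fake bids), whatever the other bids. $c$-SCP: for every coalition of the miner and between $1$ and $c$ users, the expected joint utility is maximized when its users bid truthfully and the miner follows the mechanism, whatever the other users' bids. *)

theory Defs
  imports "HOL-Probability.Probability" "HOL-Library.Extended_Nat"
begin

text \<open>A bid vector is a list of reals; user k is the owner of position k.
  An outcome of the blockchain-side rules on a list of included bids is a triple
  (C, p, r): the set C of confirmed positions (in the included list), the payment p j
  of each included position j, and the miner revenue r.  Randomization is modelled by pmfs
  (the confirmation, payment and miner-revenue rules share their randomness).
  The inclusion rule maps the bid vector to a random set of indices of bids to include.\<close>

type_synonym outcome = "nat set \<times> (nat \<Rightarrow> real) \<times> real"

record tfm =
  incl :: "real list \<Rightarrow> nat set pmf"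
  conf :: "real list \<Rightarrow> outcome pmf"

definition nonneg :: "real list \<Rightarrow> bool" where
  "nonneg b \<longleftrightarrow> (\<forall>y\<in>set b. 0 \<le> y)"

definition incl_bids :: "real list \<Rightarrow> nat set \<Rightarrow> real list" where
  "incl_bids b S = map (\<lambda>k. b ! k) (sorted_list_of_set S)"

definition valid_tfm :: "enat \<Rightarrow> tfm \<Rightarrow> bool" where
  "valid_tfm B M \<longleftrightarrow>
     (\<forall>b S. nonneg b \<longrightarrow> S \<in> set_pmf (incl M b) \<longrightarrow>
        S \<subseteq> {..<length b} \<and> enat (card S) \<le> B) \<and>
     (\<forall>c C p r. nonneg c \<longrightarrow> (C, p, r) \<in> set_pmf (conf M c) \<longrightarrow>
        C \<subseteq> {..<length c} \<and> (\<forall>j\<in>C. 0 \<le> p j \<and> p j \<le> c ! j) \<and> (\<forall>j. j \<notin> C \<longrightarrow> p j = 0) \<and>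
        0 \<le> r \<and> r \<le> (\<Sum>j\<in>C. p j))"

definition out_conf :: "tfm \<Rightarrow> real list \<Rightarrow> nat set \<Rightarrow> nat \<Rightarrow> real" where
  "out_conf M b S i = measure_pmf.expectation (conf M (incl_bids b S))
     (\<lambda>(C, p, r). if (\<exists>k<card S. sorted_list_of_set S ! k = i \<and> k \<in> C) then 1 else 0)"

definition out_pay :: "tfm \<Rightarrow> real list \<Rightarrow> nat set \<Rightarrow> nat \<Rightarrow> real" where
  "out_pay M b S i = measure_pmf.expectation (conf M (incl_bids b S))
     (\<lambda>(C, p, r). \<Sum>k\<in>{k. k < card S \<and> sorted_list_of_set S ! k = i}. p k)"

definition out_rev :: "tfm \<Rightarrow> real list \<Rightarrow> nat set \<Rightarrow> real" where
  "out_rev M b S = measure_pmf.expectation (conf M (incl_bids b S)) (\<lambda>(C, p, r). r)"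

definition xc :: "tfm \<Rightarrow> real list \<Rightarrow> nat \<Rightarrow> real" where
  "xc M b i = measure_pmf.expectation (incl M b) (\<lambda>S. out_conf M b S i)"

definition pc :: "tfm \<Rightarrow> real list \<Rightarrow> nat \<Rightarrow> real" where
  "pc M b i = measure_pmf.expectation (incl M b) (\<lambda>S. out_pay M b S i)"

definition mu :: "tfm \<Rightarrow> real list \<Rightarrow> real" where
  "mu M b = measure_pmf.expectation (incl M b) (\<lambda>S. out_rev M b S)"

definition nontrivial_revenue :: "tfm \<Rightarrow> bool" where
  "nontrivial_revenue M \<longleftrightarrow> (\<exists>b. nonneg b \<and> mu M b \<noteq> 0)"

definition symmetric_tfm :: "tfm \<Rightarrow> bool" where
  "symmetric_tfm M \<longleftrightarrow>
     (\<forall>b i j. nonneg b \<longrightarrow> i < length b \<longrightarrow> j < length b \<longrightarrow>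
        (let b' = b[i := b ! j, j := b ! i];
             sw = (\<lambda>k. if k = i then j else if k = j then i else k)
         in (\<forall>k<length b. xc M b' k = xc M b (sw k) \<and> pc M b' k = pc M b (sw k)) \<and>
            mu M b' = mu M b))"

text \<open>UIC: the honest vector is bs (so bs ! i is user i's true value); the deviating user i
  bids b' instead and injects fake bids fs (true value 0), appended after the real bids;
  the miner follows the honest inclusion rule.\<close>
definition UIC :: "tfm \<Rightarrow> bool" where
  "UIC M \<longleftrightarrow>
     (\<forall>bs i b' fs. nonneg bs \<longrightarrow> i < length bs \<longrightarrow> 0 \<le> b' \<longrightarrow> nonneg fs \<longrightarrow>
        (let d = bs[i := b'] @ fs in
           bs ! i * xc M d i - pc M d i - (\<Sum>k\<in>{length bs..<length d}. pc M d k))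
        \<le> bs ! i * xc M bs i - pc M bs i)"

text \<open>c-SCP: a coalition of the miner with a set U of between 1 and c users (true values bs ! j),
  whose users may bid d j instead, which may inject fake bids fs, and whose miner may include
  any set S of at most B of the available bids.  (Randomized deviations, and deviations in which
  the miner follows the inclusion rule, are convex combinations of these deterministic ones.)\<close>
definition c_SCP :: "enat \<Rightarrow> nat \<Rightarrow> tfm \<Rightarrow> bool" where
  "c_SCP B c M \<longleftrightarrow>
     (\<forall>bs U d fs S. nonneg bs \<longrightarrow> U \<subseteq> {..<length bs} \<longrightarrow> 1 \<le> card U \<longrightarrow> card U \<le> c \<longrightarrow>
        (\<forall>j\<in>U. 0 \<le> d j) \<longrightarrow> nonneg fs \<longrightarrow>
        (let b'' = map (\<lambda>j. if j \<in> U then d j else bs ! j) [0..<length bs] @ fs in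
          S \<subseteq> {..<length b''} \<longrightarrow> enat (card S) \<le> B \<longrightarrow>
          out_rev M b'' S + (\<Sum>j\<in>U. bs ! j * out_conf M b'' S j - out_pay M b'' S j)
            - (\<Sum>k\<in>{length bs..<length b''}. out_pay M b'' S k)
          \<le> mu M bs + (\<Sum>j\<in>U. bs ! j * xc M bs j - pc M bs j)))"

end

theory Submission
  imports Defs
begin

text \<open>Fix the bids of all users but i and let X, P and m be user i's confirmation probability,
  expected payment and the miner's revenue as functions of i's bid.  UIC says that the utility
  F v = v X v - P v of truthful bidding dominates every misreport: F v \<ge> F w + (v - w) X w.
  1-SCP with the coalition of the miner and user i says the same of G = F + m.  Two functions
  with the common subgradient X differ by a constant, so m does not depend on i's bid.  Zeroing
  the bids one at a time, the miner's revenue equals that on the all-zero bid vector, where it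
  vanishes because the miner cannot receive more than the confirmed bids pay.\<close>

lemma common_subgradient_diff_const:
  fixes F G X :: "real \<Rightarrow> real"
  assumes F: "\<And>v w. v \<in> {a..b} \<Longrightarrow> w \<in> {a..b} \<Longrightarrow> F w + (v - w) * X w \<le> F v"
    and G: "\<And>v w. v \<in> {a..b} \<Longrightarrow> w \<in> {a..b} \<Longrightarrow> G w + (v - w) * X w \<le> G v"
    and "a \<le> b"
  shows "G b - F b = G a - F a"
proof -
  define D where "D t = G t - F t" for t
  have step: "\<bar>D t - D s\<bar> \<le> (t - s) * (X t - X s)" if "s \<in> {a..b}" "t \<in> {a..b}" for s t
  proof -
    have "F s + (t - s) * X s \<le> F t" "F t + (s - t) * X t \<le> F s"
      "G s + (t - s) * X s \<le> G t" "G t + (s - t) * X t \<le> G s"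
      using F G that by auto
    moreover have swap: "(s - t) * X t = - ((t - s) * X t)"
      by (simp add: algebra_simps)
    moreover have expand: "(t - s) * (X t - X s) = (t - s) * X t - (t - s) * X s"
      by (simp add: algebra_simps)
    ultimately show ?thesis
      unfolding D_def abs_le_iff swap expand by linarith
  qed
  have bound: "\<bar>D b - D a\<bar> \<le> (b - a) * (X b - X a) / real n" if "n \<ge> 1" for n :: nat
  proof -
    define h where "h = (b - a) / real n"
    have "0 \<le> h" and n_h: "real n * h = b - a"
      using \<open>a \<le> b\<close> \<open>n \<ge> 1\<close> by (simp_all add: h_def)
    have "\<bar>D (a + real k * h) - D a\<bar> \<le> h * (X (a + real k * h) - X a)" if "k \<le> n" for k
      using that
    proof (induction k)
      case 0
      then show ?case by simp
    next
      case (Suc k)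
      have "real k * h \<le> real n * h" "real (Suc k) * h \<le> real n * h"
        using Suc.prems \<open>0 \<le> h\<close> by (simp_all add: mult_right_mono)
      then have "a + real k * h \<in> {a..b}" "a + real (Suc k) * h \<in> {a..b}"
        using \<open>0 \<le> h\<close> n_h by auto
      from step[OF this] have "\<bar>D (a + real (Suc k) * h) - D (a + real k * h)\<bar>
          \<le> h * (X (a + real (Suc k) * h) - X (a + real k * h))"
        by (simp add: algebra_simps)
      with Suc show ?case by (simp add: algebra_simps)
    qed
    from this[OF order_refl] show ?thesis
      using \<open>n \<ge> 1\<close> by (simp add: n_h h_def)
  qed
  have "\<bar>D b - D a\<bar> \<le> 0"
  proof (rule ccontr)
    assume "\<not> \<bar>D b - D a\<bar> \<le> 0"
    then have "0 < \<bar>D b - D a\<bar>"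
      by simp
    then obtain n where n: "(b - a) * (X b - X a) < real n * \<bar>D b - D a\<bar>"
      using reals_Archimedean3 by blast
    have "0 \<le> (b - a) * (X b - X a)"
      using bound[of 1] abs_ge_zero[of "D b - D a"] by simp
    with n have "n \<ge> 1"
      by (cases n) auto
    then have "\<bar>D b - D a\<bar> * real n \<le> (b - a) * (X b - X a)"
      using bound[of n] by (simp add: pos_le_divide_eq)
    with n show False
      by (simp add: mult.commute)
  qed
  then show ?thesis
    unfolding D_def by simp
qed

lemma expectation_le_const_finite:
  fixes f :: "'a \<Rightarrow> real"
  assumes "finite (set_pmf p)" "\<And>x. x \<in> set_pmf p \<Longrightarrow> f x \<le> c"
  shows "measure_pmf.expectation p f \<le> c"
  by (rule measure_pmf.integral_le_const)
     (use assms in \<open>auto simp: integrable_measure_pmf_finite AE_measure_pmf_iff\<close>)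

lemma nonneg_list_update: "nonneg bs \<Longrightarrow> 0 \<le> v \<Longrightarrow> nonneg (bs[i := v])"
  unfolding nonneg_def using set_update_subset_insert by fastforce

lemma finite_set_pmf_incl:
  assumes "valid_tfm B M" "nonneg b"
  shows "finite (set_pmf (incl M b))"
proof (rule finite_subset)
  show "set_pmf (incl M b) \<subseteq> Pow {..<length b}"
    using assms unfolding valid_tfm_def by blast
qed simp

lemma UIC_bid_update:
  assumes "UIC M" "nonneg bs" "i < length bs" "0 \<le> v" "0 \<le> w"
  shows "v * xc M (bs[i := w]) i - pc M (bs[i := w]) i
     \<le> v * xc M (bs[i := v]) i - pc M (bs[i := v]) i"
proof -
  have "nonneg (bs[i := v])"
    using assms by (simp add: nonneg_list_update)
  moreover have "nonneg ([] :: real list)"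
    by (simp add: nonneg_def)
  ultimately show ?thesis
    using assms(1)[unfolded UIC_def, rule_format, of "bs[i := v]" i w "[]"] assms(3-5)
    by (simp add: Let_def)
qed

lemma SCP_bid_update:
  assumes valid: "valid_tfm B M" and scp: "c_SCP B 1 M"
    and bs: "nonneg bs" "i < length bs" and "0 \<le> v" "0 \<le> w"
  shows "mu M (bs[i := w]) + (v * xc M (bs[i := w]) i - pc M (bs[i := w]) i)
     \<le> mu M (bs[i := v]) + (v * xc M (bs[i := v]) i - pc M (bs[i := v]) i)"
proof -
  define c where "c = bs[i := v]"
  define d where "d = bs[i := w]"
  have "nonneg c" "nonneg d"
    using assms by (simp_all add: c_def d_def nonneg_list_update)
  have deviation: "map (\<lambda>j. if j \<in> {i} then w else c ! j) [0..<length c] @ [] = d"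
    by (rule nth_equalityI) (use bs in \<open>auto simp: c_def d_def\<close>)
  \<comment> \<open>The coalition lets user i bid w and includes what the honest rule would include on
    the resulting bids; 1-SCP covers each included set separately, so we average over them.\<close>
  have "out_rev M d S + (v * out_conf M d S i - out_pay M d S i)
      \<le> mu M c + (v * xc M c i - pc M c i)" if "S \<in> set_pmf (incl M d)" for S
  proof -
    have "S \<subseteq> {..<length d}" "enat (card S) \<le> B"
      using valid \<open>nonneg d\<close> that unfolding valid_tfm_def by blast+
    moreover have "c ! i = v" "length d = length c" "{i} \<subseteq> {..<length c}"
      using bs by (simp_all add: c_def d_def)
    moreover have "nonneg ([] :: real list)"
      by (simp add: nonneg_def)
    ultimately show ?thesis
      using scp[unfolded c_SCP_def, rule_format, of c "{i}" "\<lambda>_. w" "[]" S]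
        \<open>nonneg c\<close> \<open>0 \<le> w\<close>
      unfolding deviation Let_def by simp
  qed
  then have "measure_pmf.expectation (incl M d)
      (\<lambda>S. out_rev M d S + (v * out_conf M d S i - out_pay M d S i))
      \<le> mu M c + (v * xc M c i - pc M c i)"
    using finite_set_pmf_incl[OF valid \<open>nonneg d\<close>] by (intro expectation_le_const_finite)
  moreover have int: "integrable (measure_pmf (incl M d)) f" for f :: "nat set \<Rightarrow> real"
    using finite_set_pmf_incl[OF valid \<open>nonneg d\<close>] by (rule integrable_measure_pmf_finite)
  ultimately show ?thesis
    unfolding c_def d_def mu_def xc_def pc_def
    by (simp add: Bochner_Integration.integral_add[OF int int]
        Bochner_Integration.integral_diff[OF int int] int)
qed

lemma mu_bid_update_zero:
  assumes valid: "valid_tfm B M" and scp: "c_SCP B 1 M" and uic: "UIC M"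
    and bs: "nonneg bs" "i < length bs"
  shows "mu M (bs[i := 0]) = mu M bs"
proof -
  define X where "X t = xc M (bs[i := t]) i" for t
  define F where "F t = t * X t - pc M (bs[i := t]) i" for t
  define G where "G t = F t + mu M (bs[i := t])" for t
  have F: "F w + (v - w) * X w \<le> F v" if "v \<in> {0..bs ! i}" "w \<in> {0..bs ! i}" for v w
  proof -
    have "F w + (v - w) * X w = v * X w - pc M (bs[i := w]) i"
      by (simp add: F_def algebra_simps)
    with UIC_bid_update[OF uic bs, of v w] that show ?thesis
      by (simp add: F_def X_def)
  qed
  have G: "G w + (v - w) * X w \<le> G v" if "v \<in> {0..bs ! i}" "w \<in> {0..bs ! i}" for v w
  proof -
    have "G w + (v - w) * X w = mu M (bs[i := w]) + (v * X w - pc M (bs[i := w]) i)"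
      by (simp add: G_def F_def algebra_simps)
    with SCP_bid_update[OF valid scp bs, of v w] that show ?thesis
      by (simp add: G_def F_def X_def)
  qed
  have "0 \<le> bs ! i"
    using bs unfolding nonneg_def by simp
  with F G have "G (bs ! i) - F (bs ! i) = G 0 - F 0"
    by (rule common_subgradient_diff_const)
  then show ?thesis
    by (simp add: G_def)
qed

lemma mu_replicate_zero_prefix:
  assumes valid: "valid_tfm B M" and scp: "c_SCP B 1 M" and uic: "UIC M"
    and bs: "nonneg bs" and "k \<le> length bs"
  shows "mu M (replicate k 0 @ drop k bs) = mu M bs"
  using \<open>k \<le> length bs\<close>
proof (induction k)
  case 0
  then show ?case by simp
next
  case (Suc k)
  define c where "c = replicate k 0 @ drop k bs"
  have "nonneg c"
    using bs unfolding c_def nonneg_def by (auto dest: in_set_dropD)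
  moreover have "k < length c"
    using Suc.prems by (simp add: c_def)
  ultimately have "mu M (c[k := 0]) = mu M c"
    by (rule mu_bid_update_zero[OF valid scp uic])
  moreover have "drop k bs = bs ! k # drop (Suc k) bs"
    using Suc.prems by (simp add: Cons_nth_drop_Suc)
  then have "c[k := 0] = replicate (Suc k) 0 @ drop (Suc k) bs"
    by (simp add: c_def list_update_append replicate_app_Cons_same)
  ultimately show ?case
    using Suc by (simp add: c_def)
qed

lemma revenue_zero_of_zero_bids:
  assumes "valid_tfm B M" "set c \<subseteq> {0}" "(C, p, r) \<in> set_pmf (conf M c)"
  shows "r = 0"
proof -
  have "nonneg c"
    using assms(2) unfolding nonneg_def by auto
  then have C: "C \<subseteq> {..<length c}" and p: "\<forall>j\<in>C. p j \<le> c ! j"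
    and r: "0 \<le> r" "r \<le> (\<Sum>j\<in>C. p j)"
    using assms(1,3) unfolding valid_tfm_def by blast+
  have "p j \<le> 0" if "j \<in> C" for j
  proof -
    have "j < length c"
      using C that by auto
    then have "c ! j = 0"
      using assms(2) nth_mem by blast
    with p that show ?thesis
      by auto
  qed
  then have "(\<Sum>j\<in>C. p j) \<le> 0"
    by (rule sum_nonpos)
  with r show ?thesis
    by linarith
qed

lemma mu_replicate_zero:
  assumes valid: "valid_tfm B M"
  shows "mu M (replicate n 0) = 0"
proof -
  let ?z = "replicate n (0 :: real)"
  have "out_rev M ?z S = 0" if "S \<in> set_pmf (incl M ?z)" for S
  proof -
    have "nonneg ?z"
      by (simp add: nonneg_def)
    with valid that have "S \<subseteq> {..<n}"
      unfolding valid_tfm_def by fastforce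
    then have "set (incl_bids ?z S) \<subseteq> {0}"
      using finite_subset[of S "{..<n}"] by (auto simp: incl_bids_def)
    then have "AE x in measure_pmf (conf M (incl_bids ?z S)). snd (snd x) = 0"
      unfolding AE_measure_pmf_iff by (metis revenue_zero_of_zero_bids[OF valid] prod.collapse)
    then show ?thesis
      unfolding out_rev_def by (simp add: case_prod_beta integral_cong_AE)
  qed
  then have "AE S in measure_pmf (incl M ?z). out_rev M ?z S = 0"
    by (simp add: AE_measure_pmf_iff)
  then show ?thesis
    unfolding mu_def by (simp add: integral_cong_AE)
qed

theorem mainTheorem1:
  fixes B :: enat and M :: tfm
  assumes "B \<noteq> 0"
    and "valid_tfm B M"
    and "symmetric_tfm M"
    and "UIC M"
    and "c_SCP B 1 M"
  shows "\<not> nontrivial_revenue M"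
proof
  assume "nontrivial_revenue M"
  then obtain b where "nonneg b" "mu M b \<noteq> 0"
    unfolding nontrivial_revenue_def by blast
  moreover have "mu M (replicate (length b) 0) = mu M b"
    using mu_replicate_zero_prefix[OF assms(2,5,4) \<open>nonneg b\<close> order_refl] by simp
  ultimately show False
    using mu_replicate_zero[OF assms(2)] by simp
qed

end
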